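(* Consider the planar system \[ \frac{dx}{dt}= x\Big(1-\frac{x}{\gamma}\Big)-\frac{xy}{(1+\alpha\xi)(\omega x^2+1)+x},\qquad \frac{dy}{dt}= \frac{\delta\big(x+\xi(\omega x^2+1)\big)y}{(1+\alpha\xi)(\omega x^2+1)+x}-my-\epsilon y^2, \] with positive parameters $\gamma,\alpha,\xi,\omega,\delta,m,\epsilon$ satisfying $\delta>m$. Then every solution of this system with initial condition in the positive quadrant ($x(0)>0$, $y(0)>0$) remains bounded.
   Context: $x(t)$ and $y(t)$ denote the (nondimensionalized) prey and predator densities; $\gamma$ is the prey carrying capacity, $\alpha$ the quality and $\xi$ the quantity of additional food given to predators, $\omega$ the prey group defence parameter, $\delta$ the maximal predator growth rate, $m$ the predator mortality rate and $\epsilon$ the intra-specific competition coefficient among predators. *)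

theory Defs
  imports Complex_Main
begin

definition denom :: "real \<Rightarrow> real \<Rightarrow> real \<Rightarrow> real \<Rightarrow> real" where
  "denom \<alpha> \<xi> \<omega> x = (1 + \<alpha> * \<xi>) * (\<omega> * x\<^sup>2 + 1) + x"

definition prey_rhs :: "real \<Rightarrow> real \<Rightarrow> real \<Rightarrow> real \<Rightarrow> real \<Rightarrow> real \<Rightarrow> real" where
  "prey_rhs \<gamma> \<alpha> \<xi> \<omega> x y = x * (1 - x / \<gamma>) - x * y / denom \<alpha> \<xi> \<omega> x"

definition pred_rhs :: "real \<Rightarrow> real \<Rightarrow> real \<Rightarrow> real \<Rightarrow> real \<Rightarrow> real \<Rightarrow> real \<Rightarrow> real \<Rightarrow> real" where
  "pred_rhs \<alpha> \<xi> \<omega> \<delta> m \<epsilon> x y =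
     \<delta> * (x + \<xi> * (\<omega> * x\<^sup>2 + 1)) * y / denom \<alpha> \<xi> \<omega> x - m * y - \<epsilon> * y\<^sup>2"

end

theory Submission
  imports Defs "HOL-Analysis.Analysis"
begin

text \<open>Each equation has the form \<open>z' = z \<cdot> G\<close> with a locally bounded per-capita rate \<open>G\<close>,
  so \<open>z\<close> is squeezed from below by \<open>z(0) e\<^sup>-\<^sup>M\<^sup>t\<close> and both populations stay positive. On the
  positive quadrant the denominator is at least 1, the prey equation decreases as soon as
  \<open>x > \<gamma>\<close>, and the predator's numerical response \<open>\<delta>(x + \<xi>(\<omega>x\<^sup>2 + 1))/denom\<close> is at most
  \<open>\<delta>(1 + \<xi>)\<close>, so the predator equation decreases as soon as \<open>\<epsilon>y > \<delta>(1 + \<xi>)\<close>. A solution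
  can therefore never cross the levels \<open>max (x(0)) \<gamma>\<close> and \<open>max (y(0)) (\<delta>(1 + \<xi>)/\<epsilon>)\<close>.\<close>

lemma has_real_derivative_at_if_within_atLeast:
  fixes f :: "real \<Rightarrow> real"
  assumes "a < t" "(f has_real_derivative D) (at t within {a..})"
  shows "(f has_real_derivative D) (at t)"
proof -
  have "at t within {a..} = at t"
    using assms(1) interior_Ici[of "a - 1" a] by (intro at_within_interior) simp
  with assms(2) show ?thesis by (simp only:)
qed

lemma le_level_if_deriv_nonpos_above:
  fixes z :: "real \<Rightarrow> real"
  assumes cont: "continuous_on {a..} z" and "z a \<le> K"
    and deriv: "\<And>t. a < t \<Longrightarrow> K < z t \<Longrightarrow> \<exists>D. (z has_real_derivative D) (at t) \<and> D \<le> 0"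
    and "a \<le> t"
  shows "z t \<le> K"
proof (rule ccontr)
  assume "\<not> z t \<le> K"
  define S where "S = {u \<in> {a..t}. z u \<le> K}"
  have cont_t: "continuous_on {a..t} z" using cont by (rule continuous_on_subset) auto
  have "closed S" unfolding S_def
    by (rule continuous_on_closed_Collect_le[OF cont_t]) (auto intro: continuous_intros)
  moreover have "S \<noteq> {}" using assms by (auto simp: S_def intro!: exI[of _ a])
  moreover have "bdd_above S" by (auto simp: S_def bdd_above_def)
  ultimately have "Sup S \<in> S" by (rule closed_contains_Sup[rotated 2])
  define s where "s = Sup S"
  have s: "a \<le> s" "s < t" "z s \<le> K"
    using \<open>Sup S \<in> S\<close> \<open>\<not> z t \<le> K\<close> by (auto simp: S_def s_def order.order_iff_strict)
  have above: "K < z u" if "s < u" "u \<le> t" for u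
  proof (rule ccontr)
    assume "\<not> K < z u"
    then have "u \<in> S" using that s by (auto simp: S_def)
    then have "u \<le> s" unfolding s_def using \<open>bdd_above S\<close> by (rule cSup_upper)
    then show False using that by simp
  qed
  have "z t \<le> z s"
  proof (rule DERIV_nonpos_imp_decreasing_open[of s t z])
    show "\<exists>D. DERIV z u :> D \<and> D \<le> 0" if "s < u" "u < t" for u
      using deriv[of u] above[of u] that s by auto
  qed (use s cont_t in \<open>auto intro: continuous_on_subset\<close>)
  then show False using s \<open>\<not> z t \<le> K\<close> by simp
qed

lemma exp_lower_bound_if_deriv_eq_mult:
  fixes z G :: "real \<Rightarrow> real"
  assumes "a \<le> s" and cont: "continuous_on {a..s} z"
    and deriv: "\<And>t. a < t \<Longrightarrow> t < s \<Longrightarrow> (z has_real_derivative z t * G t) (at t)"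
    and nonneg: "\<And>t. a < t \<Longrightarrow> t < s \<Longrightarrow> 0 \<le> z t"
    and G_ge: "\<And>t. a < t \<Longrightarrow> t < s \<Longrightarrow> - M \<le> G t"
  shows "z a * exp (- M * (s - a)) \<le> z s"
proof -
  define h where "h t = z t * exp (M * t)" for t
  have "h a \<le> h s"
  proof (rule DERIV_nonneg_imp_increasing_open[OF \<open>a \<le> s\<close>])
    fix t assume t: "a < t" "t < s"
    have "DERIV h t :> z t * (G t + M) * exp (M * t)"
      unfolding h_def using deriv[OF t]
      by (auto intro!: derivative_eq_intros simp: algebra_simps)
    moreover have "0 \<le> z t * (G t + M) * exp (M * t)"
      using nonneg[OF t] G_ge[OF t] by simp
    ultimately show "\<exists>D. DERIV h t :> D \<and> 0 \<le> D" by blast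
  next
    show "continuous_on {a..s} h" unfolding h_def using cont by (auto intro!: continuous_intros)
  qed
  then have "z a * exp (M * a) / exp (M * s) \<le> z s" by (simp add: h_def divide_le_eq)
  then show ?thesis by (simp add: algebra_simps exp_diff)
qed

text \<open>The rate \<open>G\<close> only needs to be continuous while \<open>z\<close> is nonnegative: the prey's rate
  involves \<open>1 / denom\<close>, and \<open>denom\<close> may vanish at negative densities.\<close>

lemma positive_if_deriv_eq_mult:
  fixes z G :: "real \<Rightarrow> real"
  assumes cont: "continuous_on {a..} z" and "0 < z a"
    and deriv: "\<And>t. a < t \<Longrightarrow> (z has_real_derivative z t * G t) (at t)"
    and G_cont: "\<And>b. a < b \<Longrightarrow> (\<And>t. t \<in> {a..b} \<Longrightarrow> 0 \<le> z t) \<Longrightarrow> continuous_on {a..b} G"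
    and "a \<le> t"
  shows "0 < z t"
proof (rule ccontr)
  assume "\<not> 0 < z t"
  define S where "S = {u \<in> {a..t}. z u \<le> 0}"
  have cont_t: "continuous_on {a..t} z" using cont by (rule continuous_on_subset) auto
  have "closed S" unfolding S_def
    by (rule continuous_on_closed_Collect_le[OF cont_t]) (auto intro: continuous_intros)
  moreover have "S \<noteq> {}" using assms \<open>\<not> 0 < z t\<close> by (auto simp: S_def)
  moreover have "bdd_below S" by (auto simp: S_def bdd_below_def)
  ultimately have "Inf S \<in> S" by (rule closed_contains_Inf[rotated 2])
  define s where "s = Inf S"
  have s: "a \<le> s" "s \<le> t" "z s \<le> 0" using \<open>Inf S \<in> S\<close> by (auto simp: S_def s_def)
  have before: "0 < z u" if "a \<le> u" "u < s" for u
  proof (rule ccontr)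
    assume "\<not> 0 < z u"
    then have "u \<in> S" using that s by (auto simp: S_def)
    then have "s \<le> u" unfolding s_def using \<open>bdd_below S\<close> by (rule cInf_lower)
    then show False using that by simp
  qed
  have "a < s" using s \<open>0 < z a\<close> by (cases "s = a") auto
  have cont_s: "continuous_on {a..s} z" using cont_t by (rule continuous_on_subset) (use s in auto)
  have "z s = 0"
  proof (rule ccontr)
    assume "z s \<noteq> 0"
    then obtain u where u: "a \<le> u" "u \<le> s" "z u = 0"
      using IVT2'[of z s 0 a, OF _ _ _ cont_s] \<open>0 < z a\<close> s by auto
    then show False using before[of u] \<open>z s \<noteq> 0\<close> by (cases "u = s") auto
  qed
  then have "continuous_on {a..s} G"
    using G_cont[OF \<open>a < s\<close>] before by (metis atLeastAtMost_iff order.order_iff_strict)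
  then have "continuous_on {a..s} (\<lambda>u. \<bar>G u\<bar>)" by (intro continuous_intros)
  then obtain M where M: "\<And>u. u \<in> {a..s} \<Longrightarrow> \<bar>G u\<bar> \<le> M"
    using continuous_attains_sup[of "{a..s}" "\<lambda>u. \<bar>G u\<bar>"] \<open>a < s\<close> by (auto simp: Ball_def)
  have "z a * exp (- M * (s - a)) \<le> z s"
  proof (rule exp_lower_bound_if_deriv_eq_mult[OF _ cont_s])
    show "a \<le> s" using \<open>a < s\<close> by simp
    fix u assume u: "a < u" "u < s"
    then show "(z has_real_derivative z u * G u) (at u)" using deriv by simp
    show "0 \<le> z u" using before[of u] u by simp
    show "- M \<le> G u" using M[of u] u by simp
  qed
  then show False using mult_pos_pos[OF \<open>0 < z a\<close> exp_gt_zero[of "- M * (s - a)"]] \<open>z s = 0\<close> by linarith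
qed

lemma denom_ge_one:
  assumes "0 \<le> \<alpha>" "0 \<le> \<xi>" "0 \<le> \<omega>" "0 \<le> u"
  shows "1 \<le> denom \<alpha> \<xi> \<omega> u"
proof -
  have "1 * 1 \<le> (1 + \<alpha> * \<xi>) * (\<omega> * u\<^sup>2 + 1)" using assms by (intro mult_mono) auto
  then show ?thesis using \<open>0 \<le> u\<close> by (simp add: denom_def)
qed

lemma prey_rhs_eq_mult: "prey_rhs \<gamma> \<alpha> \<xi> \<omega> u v = u * (1 - u / \<gamma> - v / denom \<alpha> \<xi> \<omega> u)"
  by (simp add: prey_rhs_def algebra_simps)

lemma pred_rhs_eq_mult:
  "pred_rhs \<alpha> \<xi> \<omega> \<delta> m \<epsilon> u v =
     v * (\<delta> * (u + \<xi> * (\<omega> * u\<^sup>2 + 1)) / denom \<alpha> \<xi> \<omega> u - m - \<epsilon> * v)"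
  by (simp add: pred_rhs_def algebra_simps power2_eq_square)

lemma prey_rhs_nonpos:
  assumes "0 < \<gamma>" "0 \<le> \<alpha>" "0 \<le> \<xi>" "0 \<le> \<omega>" "\<gamma> < u" "0 \<le> v"
  shows "prey_rhs \<gamma> \<alpha> \<xi> \<omega> u v \<le> 0"
proof -
  have "u * (1 - u / \<gamma>) \<le> 0"
    using assms by (intro mult_nonneg_nonpos) (auto simp: field_simps)
  moreover have "0 \<le> u * v / denom \<alpha> \<xi> \<omega> u"
    using assms denom_ge_one[of \<alpha> \<xi> \<omega> u] by simp
  ultimately show ?thesis by (simp add: prey_rhs_def)
qed

lemma numerical_response_le:
  assumes "0 \<le> \<alpha>" "0 \<le> \<xi>" "0 \<le> \<omega>" "0 \<le> u"
  shows "u + \<xi> * (\<omega> * u\<^sup>2 + 1) \<le> (1 + \<xi>) * denom \<alpha> \<xi> \<omega> u"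
proof -
  have "\<omega> * u\<^sup>2 + 1 \<le> denom \<alpha> \<xi> \<omega> u" "u \<le> denom \<alpha> \<xi> \<omega> u"
    using assms by (simp_all add: denom_def algebra_simps)
  then show ?thesis using mult_left_mono[of _ _ \<xi>] assms(2) by (fastforce simp: algebra_simps)
qed

lemma pred_rhs_nonpos:
  assumes "0 \<le> \<alpha>" "0 \<le> \<xi>" "0 \<le> \<omega>" "0 \<le> \<delta>" "0 \<le> m" "0 \<le> u" "0 \<le> v"
    and "\<delta> * (1 + \<xi>) < \<epsilon> * v"
  shows "pred_rhs \<alpha> \<xi> \<omega> \<delta> m \<epsilon> u v \<le> 0"
proof -
  have "\<delta> * (u + \<xi> * (\<omega> * u\<^sup>2 + 1)) \<le> \<delta> * (1 + \<xi>) * denom \<alpha> \<xi> \<omega> u"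
    using mult_left_mono[OF numerical_response_le[OF assms(1-3,6)] \<open>0 \<le> \<delta>\<close>]
    by (simp add: mult.assoc)
  moreover have "1 \<le> denom \<alpha> \<xi> \<omega> u" using assms by (intro denom_ge_one)
  ultimately have "\<delta> * (u + \<xi> * (\<omega> * u\<^sup>2 + 1)) / denom \<alpha> \<xi> \<omega> u \<le> \<delta> * (1 + \<xi>)"
    by (simp add: divide_le_eq)
  then show ?thesis
    using assms(5,7,8) by (simp add: pred_rhs_eq_mult mult_nonneg_nonpos)
qed

locale prey_predator_solution =
  fixes \<gamma> \<alpha> \<xi> \<omega> \<delta> m \<epsilon> :: real and x y :: "real \<Rightarrow> real"
  assumes \<gamma>_pos: "0 < \<gamma>" and \<epsilon>_pos: "0 < \<epsilon>"
    and params_nonneg: "0 \<le> \<alpha>" "0 \<le> \<xi>" "0 \<le> \<omega>" "0 \<le> \<delta>" "0 \<le> m"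
    and x0_pos: "0 < x 0" and y0_pos: "0 < y 0"
    and x_deriv: "\<And>t. 0 \<le> t \<Longrightarrow>
      (x has_real_derivative prey_rhs \<gamma> \<alpha> \<xi> \<omega> (x t) (y t)) (at t within {0..})"
    and y_deriv: "\<And>t. 0 \<le> t \<Longrightarrow>
      (y has_real_derivative pred_rhs \<alpha> \<xi> \<omega> \<delta> m \<epsilon> (x t) (y t)) (at t within {0..})"
begin

lemma continuous_on_x: "continuous_on {0..} x"
  using x_deriv by (auto simp: continuous_on_eq_continuous_within intro: DERIV_continuous)

lemma continuous_on_y: "continuous_on {0..} y"
  using y_deriv by (auto simp: continuous_on_eq_continuous_within intro: DERIV_continuous)

lemma x_has_derivative_at:
  "0 < t \<Longrightarrow> (x has_real_derivative prey_rhs \<gamma> \<alpha> \<xi> \<omega> (x t) (y t)) (at t)"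
  using x_deriv by (intro has_real_derivative_at_if_within_atLeast) auto

lemma y_has_derivative_at:
  "0 < t \<Longrightarrow> (y has_real_derivative pred_rhs \<alpha> \<xi> \<omega> \<delta> m \<epsilon> (x t) (y t)) (at t)"
  using y_deriv by (intro has_real_derivative_at_if_within_atLeast) auto

lemma x_pos: "0 \<le> t \<Longrightarrow> 0 < x t"
proof (rule positive_if_deriv_eq_mult[OF continuous_on_x x0_pos])
  fix t :: real assume "0 < t"
  then show "(x has_real_derivative x t * (1 - x t / \<gamma> - y t / denom \<alpha> \<xi> \<omega> (x t))) (at t)"
    using x_has_derivative_at by (simp add: prey_rhs_eq_mult)
next
  fix b :: real assume "\<And>t. t \<in> {0..b} \<Longrightarrow> 0 \<le> x t"
  then have "denom \<alpha> \<xi> \<omega> (x t) \<noteq> 0" if "t \<in> {0..b}" for t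
    using denom_ge_one[OF params_nonneg(1-3)] that by force
  then show "continuous_on {0..b} (\<lambda>t. 1 - x t / \<gamma> - y t / denom \<alpha> \<xi> \<omega> (x t))"
    using continuous_on_subset[OF continuous_on_x] continuous_on_subset[OF continuous_on_y] \<gamma>_pos
    unfolding denom_def by (auto intro!: continuous_intros)
qed

lemma y_pos: "0 \<le> t \<Longrightarrow> 0 < y t"
proof (rule positive_if_deriv_eq_mult[OF continuous_on_y y0_pos])
  fix t :: real assume "0 < t"
  then show "(y has_real_derivative y t *
      (\<delta> * (x t + \<xi> * (\<omega> * (x t)\<^sup>2 + 1)) / denom \<alpha> \<xi> \<omega> (x t) - m - \<epsilon> * y t)) (at t)"
    using y_has_derivative_at by (simp add: pred_rhs_eq_mult)
next
  fix b :: real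
  have "denom \<alpha> \<xi> \<omega> (x t) \<noteq> 0" if "t \<in> {0..b}" for t
    using denom_ge_one[OF params_nonneg(1-3), of "x t"] x_pos[of t] that by simp
  then show "continuous_on {0..b}
      (\<lambda>t. \<delta> * (x t + \<xi> * (\<omega> * (x t)\<^sup>2 + 1)) / denom \<alpha> \<xi> \<omega> (x t) - m - \<epsilon> * y t)"
    using continuous_on_subset[OF continuous_on_x] continuous_on_subset[OF continuous_on_y]
    unfolding denom_def by (auto intro!: continuous_intros)
qed

lemma x_le_max: "0 \<le> t \<Longrightarrow> x t \<le> max (x 0) \<gamma>"
proof (rule le_level_if_deriv_nonpos_above[OF continuous_on_x])
  fix t assume "0 < t" "max (x 0) \<gamma> < x t"
  then have "prey_rhs \<gamma> \<alpha> \<xi> \<omega> (x t) (y t) \<le> 0"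
    using \<gamma>_pos params_nonneg y_pos[of t] by (intro prey_rhs_nonpos) auto
  then show "\<exists>D. (x has_real_derivative D) (at t) \<and> D \<le> 0"
    using x_has_derivative_at \<open>0 < t\<close> by blast
qed simp

lemma y_le_max: "0 \<le> t \<Longrightarrow> y t \<le> max (y 0) (\<delta> * (1 + \<xi>) / \<epsilon>)"
proof (rule le_level_if_deriv_nonpos_above[OF continuous_on_y])
  fix t assume "0 < t" "max (y 0) (\<delta> * (1 + \<xi>) / \<epsilon>) < y t"
  then have "\<delta> * (1 + \<xi>) < \<epsilon> * y t" using \<epsilon>_pos by (simp add: field_simps)
  then have "pred_rhs \<alpha> \<xi> \<omega> \<delta> m \<epsilon> (x t) (y t) \<le> 0"
    using params_nonneg x_pos[of t] y_pos[of t] \<open>0 < t\<close> by (intro pred_rhs_nonpos) auto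
  then show "\<exists>D. (y has_real_derivative D) (at t) \<and> D \<le> 0"
    using y_has_derivative_at \<open>0 < t\<close> by blast
qed simp

lemma solution_bounded: "\<exists>B. \<forall>t\<ge>0. \<bar>x t\<bar> \<le> B \<and> \<bar>y t\<bar> \<le> B"
proof (intro exI allI impI)
  fix t :: real assume "0 \<le> t"
  then show "\<bar>x t\<bar> \<le> max (max (x 0) \<gamma>) (max (y 0) (\<delta> * (1 + \<xi>) / \<epsilon>)) \<and>
      \<bar>y t\<bar> \<le> max (max (x 0) \<gamma>) (max (y 0) (\<delta> * (1 + \<xi>) / \<epsilon>))"
    using x_pos x_le_max y_pos y_le_max by (auto simp: abs_of_pos le_max_iff_disj)
qed

end

theorem mainTheorem1:
  fixes \<gamma> \<alpha> \<xi> \<omega> \<delta> m \<epsilon> :: real and x y :: "real \<Rightarrow> real"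
  assumes "\<gamma> > 0" "\<alpha> > 0" "\<xi> > 0" "\<omega> > 0" "\<delta> > 0" "m > 0" "\<epsilon> > 0" "\<delta> > m"
    and "x 0 > 0" "y 0 > 0"
    and "\<And>t. t \<ge> 0 \<Longrightarrow> (x has_real_derivative prey_rhs \<gamma> \<alpha> \<xi> \<omega> (x t) (y t)) (at t within {0..})"
    and "\<And>t. t \<ge> 0 \<Longrightarrow> (y has_real_derivative pred_rhs \<alpha> \<xi> \<omega> \<delta> m \<epsilon> (x t) (y t)) (at t within {0..})"
  shows "\<exists>B. \<forall>t\<ge>0. \<bar>x t\<bar> \<le> B \<and> \<bar>y t\<bar> \<le> B"
proof (rule prey_predator_solution.solution_bounded)
  show "prey_predator_solution \<gamma> \<alpha> \<xi> \<omega> \<delta> m \<epsilon> x y"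
    by unfold_locales (use assms in auto)
qed

end
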